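(* Let $\mathcal{H}_r$ be a Hirzebruch surface, $\beta$ an ample class, $f\in S_\beta$ nondegenerate, and assume $J_1(f)_{2\beta+2K_{\mathcal{H}_r}}\neq0$. For every $h\in J_1(f)_\beta\setminus\mathbb{C}f$ and all $a,b\in S_{\beta+2K_{\mathcal{H}_r}}$ not both zero, $af+bh\neq0$ in $S_{2\beta+2K_{\mathcal{H}_r}}$. In particular, the space $E_h=\{af+bh: a,b\in S_{\beta+2K_{\mathcal{H}_r}}\}$ has $\dim E_h=2\dim S_{\beta+2K_{\mathcal{H}_r}}$.
   Context: $\mathcal{H}_r$ ($r\ge0$) is the smooth complete toric surface with ray generators $(-1,r),(0,1),(1,0),(0,-1)$ and torus-invariant divisors $D_1,\dots,D_4$; its Cox ring $S=\mathbb{C}[x_1,x_2,x_3,x_4]$ is graded by $\operatorname{Pic}=\mathbb{Z}D_1\oplus\mathbb{Z}D_2$ with $\deg x_1=\deg x_3=D_1$, $\deg x_2=D_2$, $\deg x_4=rD_1+D_2$; $S_\alpha$ is the degree-$\alpha$ part. $K_{\mathcal{H}_r}=-(r+2)D_1-2D_2$. $f\in S_\beta$ is nondegenerate if $x_i\partial f/\partial x_i$ have no common zero on $\mathcal{H}_r$. $J_1(f)=\langle x_i\partial f/\partial x_i\rangle:\langle x_1x_2x_3x_4\rangle$ and $J_1(f)_\alpha=J_1(f)\cap S_\alpha$. *)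

theory Defs
  imports "HOL-Analysis.Analysis" "HOL-Library.Poly_Mapping"
begin

text \<open>Monomials x1^e1 x2^e2 x3^e3 x4^e4 are encoded by exponent quadruples (e1,e2,e3,e4);
  elements of the Cox ring S = C[x1,x2,x3,x4] are finitely supported coefficient maps.\<close>

type_synonym mono = "nat \<times> nat \<times> nat \<times> nat"
type_synonym cpoly = "mono \<Rightarrow>\<^sub>0 complex"

text \<open>Classes in Pic(H_r) = Z D1 + Z D2, written as pairs (coefficient of D1, coefficient of D2).\<close>
type_synonym cls = "int \<times> int"

definition mono_deg :: "nat \<Rightarrow> mono \<Rightarrow> cls" where
  "mono_deg r e = (case e of (e1,e2,e3,e4) \<Rightarrow>
      (int e1 + int e3 + int r * int e4, int e2 + int e4))"

definition S_deg :: "nat \<Rightarrow> cls \<Rightarrow> cpoly set" where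
  "S_deg r \<alpha> = {p. \<forall>e \<in> Poly_Mapping.keys p. mono_deg r e = \<alpha>}"

definition K_cls :: "nat \<Rightarrow> cls" where
  "K_cls r = (- (int r + 2), -2)"

definition const :: "complex \<Rightarrow> cpoly" where
  "const c = Poly_Mapping.single 0 c"

definition pscale :: "complex \<Rightarrow> cpoly \<Rightarrow> cpoly" where
  "pscale c p = const c * p"

definition var :: "nat \<Rightarrow> cpoly" where
  "var i = Poly_Mapping.single
      (if i = 1 then (1,0,0,0) else if i = 2 then (0,1,0,0)
       else if i = 3 then (0,0,1,0) else (0,0,0,1)) 1"

definition expo :: "nat \<Rightarrow> mono \<Rightarrow> nat" where
  "expo i e = (case e of (e1,e2,e3,e4) \<Rightarrow>
      (if i = 1 then e1 else if i = 2 then e2 else if i = 3 then e3 else e4))"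

text \<open>The Euler-type derivative x_i * (d f / d x_i): multiplies the coefficient of each
  monomial by its x_i exponent.\<close>
definition xdiff :: "nat \<Rightarrow> cpoly \<Rightarrow> cpoly" where
  "xdiff i f = Poly_Mapping.Abs_poly_mapping (\<lambda>e. of_nat (expo i e) * Poly_Mapping.lookup f e)"

definition peval :: "cpoly \<Rightarrow> (nat \<Rightarrow> complex) \<Rightarrow> complex" where
  "peval p x = (\<Sum>e\<in>Poly_Mapping.keys p. Poly_Mapping.lookup p e *
      (\<Prod>i\<in>{1..4::nat}. x i ^ expo i e))"

text \<open>Points of H_r = (C^4 minus Z)/G with exceptional set Z = V(x1,x3) \<union> V(x2,x4).
  A (quasi-)homogeneous polynomial vanishes at a point of H_r iff it vanishes at one
  (equivalently every) representative in C^4 minus Z.\<close>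
definition outside_Z :: "(nat \<Rightarrow> complex) \<Rightarrow> bool" where
  "outside_Z x \<longleftrightarrow> (x 1 \<noteq> 0 \<or> x 3 \<noteq> 0) \<and> (x 2 \<noteq> 0 \<or> x 4 \<noteq> 0)"

definition nondegenerate :: "cpoly \<Rightarrow> bool" where
  "nondegenerate f \<longleftrightarrow>
     \<not> (\<exists>x. outside_Z x \<and> (\<forall>i\<in>{1..4::nat}. peval (xdiff i f) x = 0))"

text \<open>J_1(f) = < x_i df/dx_i > : < x1 x2 x3 x4 >.\<close>
definition J1 :: "cpoly \<Rightarrow> cpoly set" where
  "J1 f = {g. \<exists>q :: nat \<Rightarrow> cpoly.
      g * (var 1 * var 2 * var 3 * var 4) = (\<Sum>i\<in>{1..4::nat}. q i * xdiff i f)}"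

definition J1_deg :: "nat \<Rightarrow> cpoly \<Rightarrow> cls \<Rightarrow> cpoly set" where
  "J1_deg r f \<alpha> = J1 f \<inter> S_deg r \<alpha>"

text \<open>Intersection numbers on H_r: D1.D1 = 0, D1.D2 = 1, D2.D2 = -r.\<close>
definition inter :: "nat \<Rightarrow> cls \<Rightarrow> cls \<Rightarrow> int" where
  "inter r \<alpha> \<gamma> = fst \<alpha> * snd \<gamma> + snd \<alpha> * fst \<gamma> - int r * snd \<alpha> * snd \<gamma>"

definition Dcls :: "nat \<Rightarrow> nat \<Rightarrow> cls" where
  "Dcls r i = (if i = 1 \<or> i = 3 then (1,0) else if i = 2 then (0,1) else (int r, 1))"

text \<open>Ampleness via the toric Kleiman criterion: positive degree on every
  torus-invariant curve D_1,...,D_4.\<close>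
definition ample :: "nat \<Rightarrow> cls \<Rightarrow> bool" where
  "ample r \<beta> \<longleftrightarrow> (\<forall>i\<in>{1..4::nat}. inter r \<beta> (Dcls r i) > 0)"

lemma const_add: "const (a + b) = const a + const b"
  unfolding const_def by (simp add: Poly_Mapping.single_add)

lemma const_mult: "const (a * b) = const a * const b"
  unfolding const_def by (simp add: Poly_Mapping.mult_single)

lemma vector_space_pscale: "Vector_Spaces.vector_space pscale"
  by unfold_locales
    (simp_all add: pscale_def const_add const_mult distrib_left distrib_right
       mult.assoc, simp add: const_def)


definition cdim :: "cpoly set \<Rightarrow> nat" where
  "cdim A = vector_space.dim pscale A"

end

(*
  A nondegenerate f of ample class beta = p D1 + q D2 has a nonzero coefficient at the corner
  monomial x1^p x2^q, and setting x3 = x4 = 1 maps each graded piece of the Cox ring injectively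
  into C[x1][x2], sending f to a polynomial F of x2-degree q.

  F is irreducible: a factorization F = G K lifts to f = g k with forms g, k whose classes have
  positive intersection number (by ampleness). Such forms meet on H_r, because the resultant
  Phi(s, t) of their restrictions to the fibre of H_r -> P^1 over (s : t) is weighted
  homogeneous of that positive weight and hence has a zero. At a common zero of g and k all
  x_i df/dx_i vanish, contradicting nondegeneracy.

  If a f + b h = 0 with a, b of class beta + 2K, then b has x2-degree at most q - 4 < deg F, so
  the prime F divides the dehomogenization of h, which has the same bidegree as F; hence h is a
  scalar multiple of f, or a = b = 0. Thus (a, b) |-> a f + b h is injective on pairs from
  S_(beta+2K), and a basis of S_(beta+2K) yields a basis of E_h of twice the size.
*)

theory Submission
  imports Defs "Subresultants.Resultant_Prelim"
    "HOL-Computational_Algebra.Polynomial_Factorial"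
    "HOL-Computational_Algebra.Field_as_Ring"
    "HOL-Computational_Algebra.Fundamental_Theorem_Algebra"
begin

(* keeps the variable index 1 from being rewritten to Suc 0 *)
declare One_nat_def [simp del]

section \<open>Polynomials, Sylvester matrices and polynomial functions\<close>

lemma poly_mapping_sum_single:
  "p = (\<Sum>k\<in>Poly_Mapping.keys p. Poly_Mapping.single k (Poly_Mapping.lookup p k))"
  by (rule poly_mapping_eqI) (simp add: lookup_sum lookup_single when_def in_keys_iff)

lemma poly_mapping_induct [case_names zero single add]:
  fixes p :: "'a \<Rightarrow>\<^sub>0 'b::comm_monoid_add"
  assumes zero: "P 0" and single: "\<And>k v. P (Poly_Mapping.single k v)"
    and add: "\<And>p q. P p \<Longrightarrow> P q \<Longrightarrow> P (p + q)"
  shows "P p"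
proof -
  have "P (\<Sum>k\<in>A. Poly_Mapping.single k (c k))" if "finite A" for A and c :: "'a \<Rightarrow> 'b"
    using that by (induction A rule: finite_induct) (simp_all add: zero single add)
  then show ?thesis by (metis finite_keys poly_mapping_sum_single)
qed

lemma sum_lessThan_add_split:
  fixes n m :: nat
  shows "(\<Sum>i<n + m. f i) = (\<Sum>i<n. f i) + (\<Sum>i<m. f (n + i))"
  by (induction m) (simp_all add: add_ac)

lemma coeff_sum_monom_mult:
  "coeff ((\<Sum>i\<in>I. monom (c i) (s i)) * P) k = (\<Sum>i\<in>I. c i * (if s i \<le> k then coeff P (k - s i) else 0))"
  unfolding sum_distrib_right coeff_sum coeff_monom_mult by (rule sum.cong) auto

lemma coeff_sum_monom_inj:
  assumes "finite I" "inj_on s I" "j \<in> I"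
  shows "coeff (\<Sum>i\<in>I. monom (c i) (s i)) (s j) = c j"
proof -
  have "coeff (\<Sum>i\<in>I. monom (c i) (s i)) (s j) = (\<Sum>i\<in>I. if i = j then c i else 0)"
    unfolding coeff_sum coeff_monom using assms by (intro sum.cong) (auto dest: inj_onD)
  with assms(1,3) show ?thesis by simp
qed

lemma sylvester_mat_sub_index_shift:
  fixes P Q :: "'a::comm_semiring_1 poly"
  assumes P: "degree P \<le> m" and Q: "degree Q \<le> n" and ij: "i < m + n" "j < m + n"
  shows "sylvester_mat_sub m n P Q $$ (i, j) =
    (if i < n then (if n - 1 - i \<le> m + n - 1 - j then coeff P (m + i - j) else 0)
     else (if m + n - 1 - i \<le> m + n - 1 - j then coeff Q (i - j) else 0))"
  unfolding sylvester_mat_sub_index[OF ij]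
  using ij coeff_eq_0[of P "m + i - j"] coeff_eq_0[of Q "i - j"] P Q by auto

text \<open>Row \<open>i\<close> of the Sylvester matrix lists, from the top degree \<open>m + n - 1\<close> down, the
  coefficients of \<open>x\<^sup>n\<^sup>-\<^sup>1\<^sup>-\<^sup>i P\<close> for \<open>i < n\<close> and of \<open>x\<^sup>m\<^sup>+\<^sup>n\<^sup>-\<^sup>1\<^sup>-\<^sup>i Q\<close> otherwise.\<close>

lemma coeff_sylvester_combination:
  fixes P Q :: "'a::comm_semiring_1 poly"
  assumes P: "degree P \<le> m" and Q: "degree Q \<le> n"
  shows "coeff ((\<Sum>i<n. monom (w i) (n - 1 - i)) * P + (\<Sum>i\<in>{n..<m + n}. monom (w i) (m + n - 1 - i)) * Q) k =
    (if k < m + n then (\<Sum>i<m + n. sylvester_mat_sub m n P Q $$ (i, m + n - 1 - k) * w i) else 0)"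
proof (cases "k < m + n")
  case True
  have split: "(\<Sum>i<m + n. g i) = (\<Sum>i<n. g i) + (\<Sum>i\<in>{n..<m + n}. g i)" for g :: "nat \<Rightarrow> 'a"
    by (simp add: lessThan_atLeast0 sum.atLeastLessThan_concat)
  from True P Q show ?thesis
    unfolding split coeff_add coeff_sum_monom_mult
    by (auto simp: sylvester_mat_sub_index_shift mult.commute add_ac
        intro!: arg_cong2[where f = "(+)"] sum.cong)
next
  case False
  have "coeff ((\<Sum>i<n. monom (w i) (n - 1 - i)) * P) k = 0"
    "coeff ((\<Sum>i\<in>{n..<m + n}. monom (w i) (m + n - 1 - i)) * Q) k = 0"
    unfolding coeff_sum_monom_mult using False P Q by (auto simp: coeff_eq_0 intro!: sum.neutral)
  with False show ?thesis by simp
qed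

lemma sylvester_det_0_imp_syzygy:
  fixes P Q :: "'a::field poly"
  assumes P: "degree P \<le> m" and Q: "degree Q \<le> n"
    and det0: "Determinant.det (sylvester_mat_sub m n P Q) = 0"
  obtains A B where "A * P + B * Q = 0" "A \<noteq> 0 \<or> B \<noteq> 0"
    "\<And>k. n \<le> k \<Longrightarrow> coeff A k = 0" "\<And>k. m \<le> k \<Longrightarrow> coeff B k = 0"
proof -
  let ?N = "m + n" and ?M = "sylvester_mat_sub m n P Q"
  have "Determinant.det ?M\<^sup>T = 0"
    using det0 det_transpose[OF sylvester_mat_sub_carrier[of m n P Q]] by simp
  then obtain v where v: "v \<in> carrier_vec ?N" "v \<noteq> 0\<^sub>v ?N" "?M\<^sup>T *\<^sub>v v = 0\<^sub>v ?N"
    using det_0_iff_vec_prod_zero_field[of "?M\<^sup>T" ?N] sylvester_mat_sub_carrier[of m n P Q] by auto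
  define A where "A = (\<Sum>i<n. monom (v $ i) (n - 1 - i))"
  define B where "B = (\<Sum>i\<in>{n..<?N}. monom (v $ i) (?N - 1 - i))"
  have "(\<Sum>i<?N. ?M $$ (i, j) * v $ i) = 0" if "j < ?N" for j
  proof -
    have "(?M\<^sup>T *\<^sub>v v) $ j = (\<Sum>i<?N. ?M $$ (i, j) * v $ i)"
      using that v(1) by (simp add: scalar_prod_def lessThan_atLeast0 mult.commute)
    with v(3) that show ?thesis by simp
  qed
  then have "A * P + B * Q = 0"
    unfolding A_def B_def by (intro poly_eqI) (simp only: coeff_sylvester_combination[OF P Q] coeff_0, simp)
  moreover have "A \<noteq> 0 \<or> B \<noteq> 0"
  proof -
    obtain i where i: "i < ?N" "v $ i \<noteq> 0"
      using v(1,2) by (metis carrier_vecD eq_vecI index_zero_vec)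
    show ?thesis
    proof (cases "i < n")
      case True
      have "coeff A (n - 1 - i) = v $ i"
        unfolding A_def by (rule coeff_sum_monom_inj) (use True in \<open>auto simp: inj_on_def\<close>)
      with i show ?thesis by auto
    next
      case False
      have "coeff B (?N - 1 - i) = v $ i"
        unfolding B_def by (rule coeff_sum_monom_inj) (use False i in \<open>auto simp: inj_on_def\<close>)
      with i show ?thesis by auto
    qed
  qed
  moreover have "coeff A k = 0" if "n \<le> k" for k
    unfolding A_def coeff_sum coeff_monom using that by (intro sum.neutral) auto
  moreover have "coeff B k = 0" if "m \<le> k" for k
    unfolding B_def coeff_sum coeff_monom using that by (intro sum.neutral) auto
  ultimately show ?thesis using that by blast
qed

lemma syzygy_trivial_if_coprime:
  fixes P Q A B :: "'a::field_gcd poly"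
  assumes "coprime P Q" "P \<noteq> 0" "A * P + B * Q = 0" "\<And>k. degree P \<le> k \<Longrightarrow> coeff B k = 0"
  shows "A = 0 \<and> B = 0"
proof -
  have "P dvd B * Q"
    using assms(3) by (metis add_eq_0_iff dvd_minus_iff dvd_triv_right)
  with assms(1) have "P dvd B"
    using coprime_dvd_mult_left_iff by blast
  have "B = 0"
  proof (rule ccontr)
    assume "B \<noteq> 0"
    with \<open>P dvd B\<close> have "degree P \<le> degree B" by (rule dvd_imp_degree_le)
    with assms(4) \<open>B \<noteq> 0\<close> show False by (metis leading_coeff_0_iff)
  qed
  with assms(2,3) show ?thesis by simp
qed

lemma coprime_if_no_common_root:
  fixes P Q :: "complex poly"
  assumes "P \<noteq> 0" "\<And>x. poly P x = 0 \<Longrightarrow> poly Q x \<noteq> 0"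
  shows "coprime P Q"
proof (rule ccontr)
  assume "\<not> coprime P Q"
  then have "degree (gcd P Q) \<noteq> 0"
    using assms(1) is_unit_gcd is_unit_iff_degree by (metis gcd_eq_0_iff)
  then obtain z where "poly (gcd P Q) z = 0"
    by (metis fundamental_theorem_of_algebra constant_degree)
  then have "poly P z = 0" "poly Q z = 0"
    by (metis dvd_mult_div_cancel gcd_dvd1 gcd_dvd2 mult_eq_0_iff poly_mult)+
  with assms(2) show False by blast
qed

text \<open>The first alternative is a common root at infinity.\<close>

lemma sylvester_det_0_imp_common_root:
  fixes P Q :: "complex poly"
  assumes P: "degree P \<le> m" and Q: "degree Q \<le> n"
    and det0: "Determinant.det (sylvester_mat_sub m n P Q) = 0"
  shows "(coeff P m = 0 \<and> coeff Q n = 0) \<or> (\<exists>x. poly P x = 0 \<and> poly Q x = 0)"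
proof (rule ccontr)
  assume "\<not> ?thesis"
  then have lead: "coeff P m \<noteq> 0 \<or> coeff Q n \<noteq> 0" and roots: "\<And>x. poly P x = 0 \<Longrightarrow> poly Q x \<noteq> 0"
    by auto
  obtain A B where AB: "A * P + B * Q = 0" "A \<noteq> 0 \<or> B \<noteq> 0"
    and A: "\<And>k. n \<le> k \<Longrightarrow> coeff A k = 0" and B: "\<And>k. m \<le> k \<Longrightarrow> coeff B k = 0"
    using sylvester_det_0_imp_syzygy[OF P Q det0] by blast
  from lead show False
  proof
    assume "coeff P m \<noteq> 0"
    then have "P \<noteq> 0" "degree P = m" using P le_degree by (auto intro: antisym)
    with AB B roots show False
      using syzygy_trivial_if_coprime[of P Q A B] coprime_if_no_common_root by auto
  next
    assume "coeff Q n \<noteq> 0"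
    then have "Q \<noteq> 0" "degree Q = n" using Q le_degree by (auto intro: antisym)
    moreover have "B * Q + A * P = 0" using AB(1) by (simp add: add.commute)
    ultimately show False
      using AB(2) A roots syzygy_trivial_if_coprime[of Q P B A] coprime_if_no_common_root[of Q P] by auto
  qed
qed

lemma det_scale_rows_cols:
  fixes A B :: "'a::comm_ring_1 mat"
  assumes A: "A \<in> carrier_mat N N" and B: "B \<in> carrier_mat N N"
    and scale: "\<And>i j. i < N \<Longrightarrow> j < N \<Longrightarrow> c j * B $$ (i, j) = d i * A $$ (i, j)"
  shows "(\<Prod>j<N. c j) * Determinant.det B = (\<Prod>i<N. d i) * Determinant.det A"
proof -
  have "(\<Prod>j<N. c j) * (\<Prod>i<N. B $$ (i, \<sigma> i)) = (\<Prod>i<N. d i) * (\<Prod>i<N. A $$ (i, \<sigma> i))"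
    if \<sigma>: "\<sigma> permutes {..<N}" for \<sigma>
  proof -
    have "(\<Prod>j<N. c j) = (\<Prod>i<N. c (\<sigma> i))"
      using prod.permute[OF \<sigma>, of c] unfolding comp_def .
    then have "(\<Prod>j<N. c j) * (\<Prod>i<N. B $$ (i, \<sigma> i)) = (\<Prod>i<N. c (\<sigma> i) * B $$ (i, \<sigma> i))"
      by (simp only: prod.distrib)
    also have "\<dots> = (\<Prod>i<N. d i * A $$ (i, \<sigma> i))"
      using permutes_in_image[OF \<sigma>] by (intro prod.cong) (simp_all add: scale)
    finally show ?thesis by (simp add: prod.distrib)
  qed
  note term_eq = this
  show ?thesis
    unfolding det_def'[OF A] det_def'[OF B] sum_distrib_left atLeast0LessThan
  proof (rule sum.cong)
    fix \<sigma> assume "\<sigma> \<in> {\<sigma>. \<sigma> permutes {..<N}}"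
    then show "(\<Prod>j<N. c j) * (of_int (sign \<sigma>) * (\<Prod>i<N. B $$ (i, \<sigma> i))) =
        (\<Prod>i<N. d i) * (of_int (sign \<sigma>) * (\<Prod>i<N. A $$ (i, \<sigma> i)))"
      using term_eq[of \<sigma>] by (simp only: mult.left_commute[of _ "of_int (sign \<sigma>)"] mem_Collect_eq)
  qed simp
qed

definition is_poly_fun :: "('a::comm_semiring_1 \<Rightarrow> 'a) \<Rightarrow> bool" where
  "is_poly_fun h \<longleftrightarrow> (\<exists>R. \<forall>x. h x = poly R x)"

lemma is_poly_fun_const: "is_poly_fun (\<lambda>x. c)"
  unfolding is_poly_fun_def by (rule exI[of _ "[:c:]"]) simp

lemma is_poly_fun_id: "is_poly_fun (\<lambda>x. x)"
  unfolding is_poly_fun_def by (rule exI[of _ "[:0, 1:]"]) simp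

lemma is_poly_fun_add: "is_poly_fun f \<Longrightarrow> is_poly_fun g \<Longrightarrow> is_poly_fun (\<lambda>x. f x + g x)"
  unfolding is_poly_fun_def by (metis poly_add)

lemma is_poly_fun_mult: "is_poly_fun f \<Longrightarrow> is_poly_fun g \<Longrightarrow> is_poly_fun (\<lambda>x. f x * g x)"
  unfolding is_poly_fun_def by (metis poly_mult)

lemma is_poly_fun_power: "is_poly_fun f \<Longrightarrow> is_poly_fun (\<lambda>x. f x ^ n)"
  unfolding is_poly_fun_def by (metis poly_power)

lemma is_poly_fun_sum:
  "(\<And>a. a \<in> I \<Longrightarrow> is_poly_fun (f a)) \<Longrightarrow> is_poly_fun (\<lambda>x. \<Sum>a\<in>I. f a x)"
  by (induction I rule: infinite_finite_induct) (simp_all add: is_poly_fun_const is_poly_fun_add)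

lemma is_poly_fun_prod:
  "(\<And>a. a \<in> I \<Longrightarrow> is_poly_fun (f a)) \<Longrightarrow> is_poly_fun (\<lambda>x. \<Prod>a\<in>I. f a x)"
  by (induction I rule: infinite_finite_induct) (simp_all add: is_poly_fun_const is_poly_fun_mult)

lemma is_poly_fun_if: "is_poly_fun f \<Longrightarrow> is_poly_fun g \<Longrightarrow> is_poly_fun (\<lambda>x. if b then f x else g x)"
  by (cases b) simp_all

lemma is_poly_fun_det:
  fixes A :: "'a::comm_ring_1 \<Rightarrow> 'a mat"
  assumes "\<And>x. A x \<in> carrier_mat N N"
    and "\<And>i j. i < N \<Longrightarrow> j < N \<Longrightarrow> is_poly_fun (\<lambda>x. A x $$ (i, j))"
  shows "is_poly_fun (\<lambda>x. Determinant.det (A x))"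
  unfolding det_def'[OF assms(1)]
proof (rule is_poly_fun_sum, rule is_poly_fun_mult[OF is_poly_fun_const], rule is_poly_fun_prod)
  fix \<sigma> i assume "\<sigma> \<in> {\<sigma>. \<sigma> permutes {0..<N}}" "i \<in> {0..<N}"
  then have "i < N" "\<sigma> i < N" using permutes_in_image by fastforce+
  then show "is_poly_fun (\<lambda>x. A x $$ (i, \<sigma> i))" by (rule assms(2))
qed

lemma poly_eq_if_eq_off_point:
  fixes P Q :: "'a::{idom, ring_char_0} poly"
  assumes "\<And>x. x \<noteq> a \<Longrightarrow> poly P x = poly Q x"
  shows "P = Q"
proof (rule ccontr)
  assume "P \<noteq> Q"
  then have "finite (insert a {x. poly (P - Q) x = 0})"
    using poly_roots_finite[of "P - Q"] by simp
  moreover have "UNIV \<subseteq> insert a {x. poly (P - Q) x = 0}"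
    using assms by auto
  ultimately show False
    using finite_subset infinite_UNIV_char_0 by blast
qed

section \<open>The Cox ring of \<open>\<H>\<^sub>r\<close>\<close>

lemma expo_simps [simp]:
  "expo 1 (a, b, c, d) = a" "expo 2 (a, b, c, d) = b" "expo 3 (a, b, c, d) = c" "expo 4 (a, b, c, d) = d"
  by (simp_all add: expo_def)

lemma expo_add [simp]: "expo i (x + y) = expo i x + expo i y"
  by (cases x; cases y) (simp add: expo_def)

lemma mono_eqI:
  "expo 1 x = expo 1 y \<Longrightarrow> expo 2 x = expo 2 y \<Longrightarrow> expo 3 x = expo 3 y \<Longrightarrow> expo 4 x = expo 4 y
    \<Longrightarrow> x = y"
  by (cases x; cases y) simp

lemma mono_deg_expo:
  "mono_deg r e = (int (expo 1 e) + int (expo 3 e) + int r * int (expo 4 e), int (expo 2 e) + int (expo 4 e))"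
  by (cases e) (simp add: mono_deg_def)

lemma mono_deg_add: "mono_deg r (x + y) = mono_deg r x + mono_deg r y"
  by (simp add: mono_deg_expo algebra_simps)

lemma mono_deg_eq_nat_iff:
  "mono_deg r e = (int p, int q) \<longleftrightarrow> expo 1 e + expo 3 e + r * expo 4 e = p \<and> expo 2 e + expo 4 e = q"
  unfolding mono_deg_expo by (simp flip: of_nat_mult of_nat_add)

lemma mono_eq_if_same_class:
  assumes "mono_deg r e = mono_deg r e'" "expo 1 e = expo 1 e'" "expo 2 e = expo 2 e'"
  shows "e = e'"
proof -
  have "expo 4 e = expo 4 e'"
    using assms by (simp add: mono_deg_expo)
  with assms show ?thesis
    by (intro mono_eqI) (simp_all add: mono_deg_expo)
qed

lemma lookup_xdiff: "Poly_Mapping.lookup (xdiff i f) e = of_nat (expo i e) * Poly_Mapping.lookup f e"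
proof -
  have "finite {e. of_nat (expo i e) * Poly_Mapping.lookup f e \<noteq> (0::complex)}"
    by (rule finite_subset[of _ "Poly_Mapping.keys f"]) (auto simp: in_keys_iff)
  then show ?thesis unfolding xdiff_def by (simp add: Abs_poly_mapping_inverse)
qed

lemma keys_xdiff_subset: "Poly_Mapping.keys (xdiff i p) \<subseteq> Poly_Mapping.keys p"
  by (auto simp: in_keys_iff lookup_xdiff)

lemma xdiff_add: "xdiff i (p + q) = xdiff i p + xdiff i q"
  by (rule poly_mapping_eqI) (simp add: lookup_xdiff lookup_add distrib_left)

lemma xdiff_0 [simp]: "xdiff i 0 = 0"
  by (rule poly_mapping_eqI) (simp add: lookup_xdiff)

lemma xdiff_single:
  "xdiff i (Poly_Mapping.single e c) = Poly_Mapping.single e (of_nat (expo i e) * c)"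
  by (rule poly_mapping_eqI) (simp add: lookup_xdiff lookup_single when_def)

lemma xdiff_mult: "xdiff i (p * q) = xdiff i p * q + p * xdiff i q"
proof (induction p rule: poly_mapping_induct)
  case (single k v)
  show ?case
    by (induction q rule: poly_mapping_induct)
      (simp_all add: xdiff_add xdiff_single mult_single single_add algebra_simps)
qed (simp_all add: xdiff_add algebra_simps)

definition mono_val :: "(nat \<Rightarrow> complex) \<Rightarrow> mono \<Rightarrow> complex" where
  "mono_val x e = (\<Prod>i\<in>{1..4}. x i ^ expo i e)"

lemma mono_val_add: "mono_val x (e + e') = mono_val x e * mono_val x e'"
  by (simp add: mono_val_def power_add prod.distrib)

lemma peval_eq_sum: "peval p x = (\<Sum>e\<in>Poly_Mapping.keys p. Poly_Mapping.lookup p e * mono_val x e)"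
  by (simp add: peval_def mono_val_def)

lemma peval_0 [simp]: "peval 0 x = 0"
  by (simp add: peval_def)

lemma peval_add: "peval (p + q) x = peval p x + peval q x"
  unfolding peval_eq_sum by (rule setsum_keys_plus_distrib) (simp_all add: distrib_right)

lemma peval_single: "peval (Poly_Mapping.single e c) x = c * mono_val x e"
  by (simp add: peval_eq_sum)

lemma peval_mult: "peval (p * q) x = peval p x * peval q x"
proof (induction p rule: poly_mapping_induct)
  case (single k v)
  show ?case
    by (induction q rule: poly_mapping_induct)
      (simp_all add: peval_add peval_single mult_single mono_val_add algebra_simps)
qed (simp_all add: peval_add algebra_simps)

definition point4 :: "complex \<Rightarrow> complex \<Rightarrow> complex \<Rightarrow> complex \<Rightarrow> nat \<Rightarrow> complex" where
  "point4 a b c d i = (if i = 1 then a else if i = 2 then b else if i = 3 then c else d)"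

lemma mono_val_point4:
  "mono_val (point4 a b c d) e = a ^ expo 1 e * b ^ expo 2 e * c ^ expo 3 e * d ^ expo 4 e"
proof -
  have "{1..4::nat} = {1, 2, 3, 4}" by auto
  then show ?thesis by (simp add: mono_val_def point4_def mult.assoc)
qed

lemma outside_Z_point4: "outside_Z (point4 a b c d) \<longleftrightarrow> (a \<noteq> 0 \<or> c \<noteq> 0) \<and> (b \<noteq> 0 \<or> d \<noteq> 0)"
  by (simp add: outside_Z_def point4_def)

lemma degenerate_if_factors_meet:
  assumes "f = g * k" "outside_Z x" "peval g x = 0" "peval k x = 0"
  shows "\<not> nondegenerate f"
  using assms unfolding nondegenerate_def by (auto simp: xdiff_mult peval_add peval_mult)

lemma S_degD: "p \<in> S_deg r \<alpha> \<Longrightarrow> e \<in> Poly_Mapping.keys p \<Longrightarrow> mono_deg r e = \<alpha>"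
  by (simp add: S_deg_def)

lemma S_deg_natD:
  assumes "p \<in> S_deg r (int P, int Q)" "e \<in> Poly_Mapping.keys p"
  shows "expo 1 e + expo 3 e + r * expo 4 e = P" "expo 2 e + expo 4 e = Q"
  using S_degD[OF assms] by (simp_all add: mono_deg_eq_nat_iff)

lemma zero_in_S_deg [simp]: "0 \<in> S_deg r \<alpha>"
  by (simp add: S_deg_def)

lemma add_in_S_deg: "p \<in> S_deg r \<alpha> \<Longrightarrow> q \<in> S_deg r \<alpha> \<Longrightarrow> p + q \<in> S_deg r \<alpha>"
  using keys_add[of p q] by (auto simp: S_deg_def)

lemma mult_in_S_deg:
  assumes "p \<in> S_deg r \<alpha>" "q \<in> S_deg r \<gamma>"
  shows "p * q \<in> S_deg r (\<alpha> + \<gamma>)"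
  unfolding S_deg_def mem_Collect_eq
proof
  fix e assume "e \<in> Poly_Mapping.keys (p * q)"
  then obtain a b where "e = a + b" "a \<in> Poly_Mapping.keys p" "b \<in> Poly_Mapping.keys q"
    using keys_mult[of p q] by blast
  with assms show "mono_deg r e = \<alpha> + \<gamma>" by (simp add: S_degD mono_deg_add)
qed

lemma const_in_S_deg: "const c \<in> S_deg r 0"
  by (simp add: S_deg_def const_def mono_deg_expo zero_prod_def)

lemma pscale_in_S_deg: "p \<in> S_deg r \<alpha> \<Longrightarrow> pscale c p \<in> S_deg r \<alpha>"
  using mult_in_S_deg[OF const_in_S_deg] by (fastforce simp: pscale_def)

lemma pscale_mult_left: "pscale c (a * f) = pscale c a * f"
  by (simp add: pscale_def mult.assoc)

lemma xdiff_in_S_deg: "p \<in> S_deg r \<alpha> \<Longrightarrow> xdiff i p \<in> S_deg r \<alpha>"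
  using keys_xdiff_subset[of i p] by (auto simp: S_deg_def)

lemma var3_power_in_S_deg: "var 3 ^ d \<in> S_deg r (int d, 0)"
proof (induction d)
  case 0
  show ?case by (simp add: S_deg_def mono_deg_expo zero_prod_def)
next
  case (Suc d)
  have "var 3 \<in> S_deg r (1, 0)"
    by (simp add: S_deg_def var_def mono_deg_def)
  from mult_in_S_deg[OF this Suc] show ?case by simp
qed

lemma finite_mono_deg_class: "finite {e. mono_deg r e = \<gamma>}"
proof (rule finite_subset)
  let ?a = "nat (fst \<gamma>)" and ?b = "nat (snd \<gamma>)"
  show "{e. mono_deg r e = \<gamma>} \<subseteq> {..?a} \<times> {..?b} \<times> {..?a} \<times> {..?b}"
    by (clarsimp simp: mono_deg_def le_nat_iff)
qed simp

lemma S_deg_subspace: "module.subspace pscale (S_deg r \<gamma>)"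
proof -
  interpret V: vector_space pscale by (rule vector_space_pscale)
  show ?thesis
    unfolding V.subspace_def using add_in_S_deg pscale_in_S_deg by auto
qed

lemma S_deg_subset_span_monomials:
  "S_deg r \<gamma> \<subseteq> module.span pscale ((\<lambda>e. Poly_Mapping.single e 1) ` {e. mono_deg r e = \<gamma>})"
proof
  interpret V: vector_space pscale by (rule vector_space_pscale)
  fix p assume p: "p \<in> S_deg r \<gamma>"
  have "p = (\<Sum>e\<in>Poly_Mapping.keys p. pscale (Poly_Mapping.lookup p e) (Poly_Mapping.single e 1))"
    by (subst poly_mapping_sum_single) (simp add: pscale_def const_def mult_single)
  also have "\<dots> \<in> V.span ((\<lambda>e. Poly_Mapping.single e 1) ` {e. mono_deg r e = \<gamma>})"
    using S_degD[OF p] by (intro V.span_sum V.span_scale V.span_base) auto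
  finally show "p \<in> V.span ((\<lambda>e. Poly_Mapping.single e 1) ` {e. mono_deg r e = \<gamma>})" .
qed

lemma ample_classE:
  assumes "ample r \<beta>"
  obtains a b where "\<beta> = (int a, int b)" "1 \<le> b" "r * b < a"
proof -
  obtain b1 b2 where \<beta>: "\<beta> = (b1, b2)" by (cases \<beta>)
  have "inter r \<beta> (Dcls r 1) > 0" "inter r \<beta> (Dcls r 2) > 0"
    using assms by (auto simp: ample_def)
  then have "0 < b2" "int r * b2 < b1"
    by (simp_all add: inter_def Dcls_def \<beta>)
  moreover from this have "0 \<le> b1"
    by (smt (verit) mult_nonneg_nonneg of_nat_0_le_iff)
  ultimately show ?thesis
    using that[of "nat b1" "nat b2"] \<beta> by (simp add: nat_mult_distrib[symmetric] zless_nat_eq_int_zless)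
qed

section \<open>Dehomogenization and homogenization\<close>

text \<open>\<open>dehom c p = p(x\<^sub>1, x\<^sub>2, c, 1)\<close>, read in \<open>\<complex>[x\<^sub>1][x\<^sub>2]\<close>; the case \<open>c = 0\<close> detects divisibility
  by \<open>x\<^sub>3\<close>.\<close>

definition dehom :: "complex \<Rightarrow> cpoly \<Rightarrow> complex poly poly" where
  "dehom c p = (\<Sum>e\<in>Poly_Mapping.keys p.
      monom (monom (Poly_Mapping.lookup p e * c ^ expo 3 e) (expo 1 e)) (expo 2 e))"

lemma dehom_0 [simp]: "dehom c 0 = 0"
  by (simp add: dehom_def)

lemma dehom_add: "dehom c (p + q) = dehom c p + dehom c q"
  unfolding dehom_def by (rule setsum_keys_plus_distrib) (simp_all add: distrib_right add_monom)

lemma dehom_single: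
  "dehom c (Poly_Mapping.single e v) = monom (monom (v * c ^ expo 3 e) (expo 1 e)) (expo 2 e)"
  by (simp add: dehom_def)

lemma dehom_mult: "dehom c (p * q) = dehom c p * dehom c q"
proof (induction p rule: poly_mapping_induct)
  case (single k v)
  show ?case
    by (induction q rule: poly_mapping_induct)
      (simp_all add: dehom_add dehom_single mult_single mult_monom power_add algebra_simps)
qed (simp_all add: dehom_add algebra_simps)

lemma dehom_const: "dehom c (const v) = [:[:v:]:]"
  by (simp add: const_def dehom_single monom_0 zero_prod_def)

lemma dehom_var3_power: "dehom c (var 3 ^ d) = [:[:c ^ d:]:]"
proof (induction d)
  case 0
  show ?case using dehom_const[of c 1] by (simp add: const_def flip: single_one)
next
  case (Suc d)
  have "dehom c (var 3) = [:[:c:]:]"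
    by (simp add: var_def dehom_single monom_0)
  with Suc show ?case by (simp add: dehom_mult)
qed

lemma dehom_pscale: "dehom c (pscale v p) = [:[:v:]:] * dehom c p"
  by (simp add: pscale_def dehom_mult dehom_const)

lemma coeff_coeff_dehom:
  "coeff (coeff (dehom c p) j) i =
    (\<Sum>e\<in>{e\<in>Poly_Mapping.keys p. expo 1 e = i \<and> expo 2 e = j}. Poly_Mapping.lookup p e * c ^ expo 3 e)"
  unfolding dehom_def coeff_sum coeff_monom
  by (simp add: sum.inter_filter, rule sum.cong, auto)

lemma coeff_coeff_dehom_nonzeroE:
  assumes "coeff (coeff (dehom c p) j) i \<noteq> 0"
  obtains e where "e \<in> Poly_Mapping.keys p" "expo 1 e = i" "expo 2 e = j"
  using assms unfolding coeff_coeff_dehom by (metis (mono_tags, lifting) empty_Collect_eq sum.empty)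

text \<open>Within one graded piece a monomial is determined by its exponents of \<open>x\<^sub>1\<close> and
  \<open>x\<^sub>2\<close>, so dehomogenization loses no information.\<close>

lemma coeff_coeff_dehom_S_deg:
  assumes "p \<in> S_deg r \<alpha>" "mono_deg r e = \<alpha>"
  shows "coeff (coeff (dehom c p) (expo 2 e)) (expo 1 e) = Poly_Mapping.lookup p e * c ^ expo 3 e"
proof -
  have "{e'\<in>Poly_Mapping.keys p. expo 1 e' = expo 1 e \<and> expo 2 e' = expo 2 e} = {e} \<inter> Poly_Mapping.keys p"
    using assms by (auto intro: mono_eq_if_same_class dest: S_degD)
  then have "coeff (coeff (dehom c p) (expo 2 e)) (expo 1 e) =
      (\<Sum>e'\<in>{e} \<inter> Poly_Mapping.keys p. Poly_Mapping.lookup p e' * c ^ expo 3 e')"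
    by (simp only: coeff_coeff_dehom)
  then show ?thesis
    by (cases "e \<in> Poly_Mapping.keys p") (simp_all add: in_keys_iff)
qed

lemma dehom_inj_on_S_deg:
  assumes "p \<in> S_deg r \<alpha>" "q \<in> S_deg r \<alpha>" "dehom 1 p = dehom 1 q"
  shows "p = q"
proof (rule poly_mapping_eqI)
  fix e
  show "Poly_Mapping.lookup p e = Poly_Mapping.lookup q e"
  proof (cases "mono_deg r e = \<alpha>")
    case True
    then show ?thesis
      using coeff_coeff_dehom_S_deg[OF assms(1) True, of 1] coeff_coeff_dehom_S_deg[OF assms(2) True, of 1]
        assms(3) by simp
  next
    case False
    then show ?thesis using assms(1,2) by (metis S_degD in_keys_iff)
  qed
qed

lemma dehom_eq_0_iff_S_deg: "p \<in> S_deg r \<alpha> \<Longrightarrow> dehom 1 p = 0 \<longleftrightarrow> p = 0"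
  using dehom_inj_on_S_deg[of p r \<alpha> 0] by auto

lemma degree_dehom_le:
  assumes "\<And>e. e \<in> Poly_Mapping.keys p \<Longrightarrow> expo 2 e \<le> n"
  shows "degree (dehom c p) \<le> n"
proof (rule degree_le, intro allI impI poly_eqI)
  fix j i assume "n < j"
  then show "coeff (coeff (dehom c p) j) i = coeff 0 i"
    using assms coeff_coeff_dehom_nonzeroE by (metis coeff_0 not_le)
qed

lemma degree_coeff_dehom_le:
  "(\<And>e. e \<in> Poly_Mapping.keys p \<Longrightarrow> expo 1 e \<le> n) \<Longrightarrow> degree (coeff (dehom c p) j) \<le> n"
  by (rule degree_le) (metis coeff_coeff_dehom_nonzeroE not_le)

lemma degree_dehom_S_deg_le: "p \<in> S_deg r (P, int Q) \<Longrightarrow> degree (dehom c p) \<le> Q"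
  by (rule degree_dehom_le) (auto dest!: S_degD simp: mono_deg_expo)

lemma degree_coeff_dehom_S_deg_le: "p \<in> S_deg r (int P, Q) \<Longrightarrow> degree (coeff (dehom c p) j) \<le> P"
  by (rule degree_coeff_dehom_le) (auto dest!: S_degD simp: mono_deg_expo simp flip: of_nat_mult of_nat_add)

lemma degree_dehom_corner:
  assumes f: "f \<in> S_deg r (int a, int b)" and corner: "Poly_Mapping.lookup f (a, b, 0, 0) \<noteq> 0"
  shows "degree (dehom 1 f) = b" "degree (lead_coeff (dehom 1 f)) = a"
proof -
  have "mono_deg r (a, b, 0, 0) = (int a, int b)"
    by (simp add: mono_deg_def)
  from coeff_coeff_dehom_S_deg[OF f this, of 1] corner
  have nz: "coeff (coeff (dehom 1 f) b) a \<noteq> 0" by simp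
  then have "coeff (dehom 1 f) b \<noteq> 0" by auto
  then show deg: "degree (dehom 1 f) = b"
    using degree_dehom_S_deg_le[OF f] le_degree by (metis antisym)
  show "degree (lead_coeff (dehom 1 f)) = a"
    unfolding deg using degree_coeff_dehom_S_deg_le[OF f] le_degree[OF nz] by (metis antisym)
qed

lemma finite_coeff_coeff_support: "finite {(i, j). coeff (coeff G j) i \<noteq> 0}"
proof (rule finite_subset)
  show "{(i, j). coeff (coeff G j) i \<noteq> 0} \<subseteq> (\<Union>j\<le>degree G. {..degree (coeff G j)}) \<times> {..degree G}"
  proof
    fix x assume "x \<in> {(i, j). coeff (coeff G j) i \<noteq> 0}"
    then obtain i j where x: "x = (i, j)" and nz: "coeff (coeff G j) i \<noteq> 0" by blast
    from nz have "j \<le> degree G" "i \<le> degree (coeff G j)"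
      by (metis coeff_0 le_degree, rule le_degree)
    then show "x \<in> (\<Union>j\<le>degree G. {..degree (coeff G j)}) \<times> {..degree G}"
      unfolding x by blast
  qed
qed simp

text \<open>\<open>homog r G\<close> is the form dehomogenizing to \<open>G\<close> in the least class
  \<open>(homog_D1_deg r G, degree G)\<close> that keeps every \<open>x\<^sub>3\<close>-exponent nonnegative.\<close>

definition homog_D1_deg :: "nat \<Rightarrow> complex poly poly \<Rightarrow> nat" where
  "homog_D1_deg r G = Max ((\<lambda>(i, j). i + r * (degree G - j)) ` {(i, j). coeff (coeff G j) i \<noteq> 0})"

definition homog :: "nat \<Rightarrow> complex poly poly \<Rightarrow> cpoly" where
  "homog r G = Abs_poly_mapping (\<lambda>e.
      if mono_deg r e = (int (homog_D1_deg r G), int (degree G))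
      then coeff (coeff G (expo 2 e)) (expo 1 e) else 0)"

lemma homog_D1_deg_ge:
  "coeff (coeff G j) i \<noteq> 0 \<Longrightarrow> i + r * (degree G - j) \<le> homog_D1_deg r G"
  unfolding homog_D1_deg_def by (rule Max_ge) (auto intro: finite_coeff_coeff_support)

lemma lookup_homog:
  "Poly_Mapping.lookup (homog r G) e =
    (if mono_deg r e = (int (homog_D1_deg r G), int (degree G))
     then coeff (coeff G (expo 2 e)) (expo 1 e) else 0)"
proof -
  let ?\<gamma> = "(int (homog_D1_deg r G), int (degree G))"
  have "finite {e. (if mono_deg r e = ?\<gamma> then coeff (coeff G (expo 2 e)) (expo 1 e) else 0) \<noteq> 0}"
    by (rule finite_subset[OF _ finite_mono_deg_class[of r ?\<gamma>]]) auto
  then show ?thesis unfolding homog_def by (simp add: Abs_poly_mapping_inverse)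
qed

lemma homog_in_S_deg: "homog r G \<in> S_deg r (int (homog_D1_deg r G), int (degree G))"
  by (auto simp: S_deg_def in_keys_iff lookup_homog split: if_splits)

lemma mono_deg_lift:
  "j \<le> q \<Longrightarrow> i + r * (q - j) \<le> p \<Longrightarrow> mono_deg r (i, j, p - (i + r * (q - j)), q - j) = (int p, int q)"
  by (simp add: mono_deg_eq_nat_iff)

lemma dehom_homog: "dehom 1 (homog r G) = G"
proof (intro poly_eqI)
  fix j i
  let ?D = "homog_D1_deg r G" and ?m = "degree G"
  show "coeff (coeff (dehom 1 (homog r G)) j) i = coeff (coeff G j) i"
  proof (cases "coeff (coeff G j) i = 0")
    case False
    then have "j \<le> ?m" "i + r * (?m - j) \<le> ?D"
      by (metis coeff_0 le_degree, rule homog_D1_deg_ge)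
    note cls = mono_deg_lift[OF this]
    from coeff_coeff_dehom_S_deg[OF homog_in_S_deg cls, of 1]
    show ?thesis by (simp add: lookup_homog cls)
  next
    case True
    show ?thesis
    proof (rule ccontr)
      assume "coeff (coeff (dehom 1 (homog r G)) j) i \<noteq> coeff (coeff G j) i"
      with True obtain e where "e \<in> Poly_Mapping.keys (homog r G)" "expo 1 e = i" "expo 2 e = j"
        by (metis coeff_coeff_dehom_nonzeroE)
      with True show False by (simp add: in_keys_iff lookup_homog split: if_splits)
    qed
  qed
qed

text \<open>By minimality of \<open>homog_D1_deg\<close>, \<open>x\<^sub>3\<close> does not divide \<open>homog r G\<close>.\<close>

lemma dehom_0_homog_nonzero:
  assumes "G \<noteq> 0"
  shows "dehom 0 (homog r G) \<noteq> 0"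
proof -
  let ?S = "{(i, j). coeff (coeff G j) i \<noteq> 0}" and ?m = "degree G"
  have "(degree (lead_coeff G), ?m) \<in> ?S"
    using assms by simp
  then have "homog_D1_deg r G \<in> (\<lambda>(i, j). i + r * (?m - j)) ` ?S"
    unfolding homog_D1_deg_def by (intro Max_in finite_imageI finite_coeff_coeff_support) blast
  then obtain i j where ij: "coeff (coeff G j) i \<noteq> 0" "homog_D1_deg r G = i + r * (?m - j)"
    by auto
  then have "j \<le> ?m" by (metis coeff_0 le_degree)
  define e where "e = (i, j, 0::nat, ?m - j)"
  have cls: "mono_deg r e = (int (homog_D1_deg r G), int ?m)"
    using mono_deg_lift[OF \<open>j \<le> ?m\<close>, of i r "homog_D1_deg r G"] ij(2) by (simp add: e_def)
  from coeff_coeff_dehom_S_deg[OF homog_in_S_deg cls, of 0]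
  have "coeff (coeff (dehom 0 (homog r G)) j) i = coeff (coeff G j) i"
    by (simp add: e_def lookup_homog cls[unfolded e_def])
  with ij(1) show ?thesis by (metis coeff_0)
qed

lemma homog_class_nonzero:
  assumes "G \<noteq> 0" "\<not> is_unit G"
  shows "homog_D1_deg r G \<noteq> 0 \<or> degree G \<noteq> 0"
proof (rule ccontr)
  assume "\<not> ?thesis"
  then have D: "homog_D1_deg r G = 0" and m: "degree G = 0" by auto
  have "coeff (coeff G 0) i = 0" if "i > 0" for i
    using homog_D1_deg_ge[of G 0 i r] D that by auto
  then have "degree (coeff G 0) = 0"
    using degree_le[of 0 "coeff G 0"] by simp
  with m have G: "G = [:[:coeff (coeff G 0) 0:]:]"
    by (metis degree_0_id)
  with assms(1) have "coeff (coeff G 0) 0 \<noteq> 0" by auto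
  with assms(2) show False
    by (subst (asm) G) (simp add: is_unit_poly_iff dvd_field_iff)
qed

text \<open>The corner coefficient rules out a spurious factor \<open>x\<^sub>3\<^sup>d\<close> in the lift.\<close>

lemma factorization_lift:
  assumes f: "f \<in> S_deg r (int a, int b)" and corner: "Poly_Mapping.lookup f (a, b, 0, 0) \<noteq> 0"
    and GK: "dehom 1 f = G * K"
  shows "f = homog r G * homog r K" "homog_D1_deg r G + homog_D1_deg r K = a"
    "degree G + degree K = b"
proof -
  let ?F = "dehom 1 f" and ?g = "homog r G" and ?k = "homog r K"
  let ?pg = "homog_D1_deg r G" and ?pk = "homog_D1_deg r K"
  have degF: "degree ?F = b" and degLF: "degree (lead_coeff ?F) = a"
    using degree_dehom_corner[OF f corner] by simp_all
  have "f \<noteq> 0" using corner by auto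
  then have "?F \<noteq> 0" using dehom_eq_0_iff_S_deg[OF f] by simp
  then have cornerF: "coeff (coeff ?F b) a \<noteq> 0"
    using degF degLF by (metis leading_coeff_neq_0)
  have G0: "G \<noteq> 0" and K0: "K \<noteq> 0" using \<open>?F \<noteq> 0\<close> GK by auto
  then show deg: "degree G + degree K = b"
    using degF GK degree_mult_eq by metis
  have gk: "?g * ?k \<in> S_deg r (int (?pg + ?pk), int b)"
    using mult_in_S_deg[OF homog_in_S_deg homog_in_S_deg, of r G K] deg[symmetric] by simp
  have dehom_gk: "dehom 1 (?g * ?k) = ?F"
    by (simp add: dehom_mult dehom_homog GK)
  then obtain e where e: "e \<in> Poly_Mapping.keys (?g * ?k)" "expo 1 e = a" "expo 2 e = b"
    using cornerF by (metis coeff_coeff_dehom_nonzeroE)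
  with S_deg_natD[OF gk e(1)] have le: "a \<le> ?pg + ?pk" by simp
  define d where "d = ?pg + ?pk - a"
  have x3f: "var 3 ^ d * f \<in> S_deg r (int (?pg + ?pk), int b)"
    using mult_in_S_deg[OF var3_power_in_S_deg f, of d] le by (simp add: d_def)
  have "dehom 1 (var 3 ^ d * f) = ?F"
    by (simp add: dehom_mult dehom_var3_power pCons_one)
  then have eq: "?g * ?k = var 3 ^ d * f"
    using dehom_inj_on_S_deg[OF gk x3f] dehom_gk by simp
  have "d = 0"
  proof (rule ccontr)
    assume "d \<noteq> 0"
    then have "dehom 0 (?g * ?k) = 0"
      unfolding eq by (simp add: dehom_mult dehom_var3_power)
    then show False
      using dehom_0_homog_nonzero[OF G0] dehom_0_homog_nonzero[OF K0] by (simp add: dehom_mult)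
  qed
  with eq le show "f = ?g * ?k" "?pg + ?pk = a" by (simp_all add: d_def)
qed

section \<open>Forms of positive intersection number meet\<close>

text \<open>Restriction \<open>y \<mapsto> p(s, y, t, 1)\<close> of \<open>p\<close> to the fibre over \<open>(s : t)\<close> of the projection
  \<open>\<H>\<^sub>r \<rightarrow> \<P>\<^sup>1\<close>, \<open>[x] \<mapsto> (x\<^sub>1 : x\<^sub>3)\<close>.\<close>

definition fibre_poly :: "complex \<Rightarrow> complex \<Rightarrow> cpoly \<Rightarrow> complex poly" where
  "fibre_poly s t p = (\<Sum>e\<in>Poly_Mapping.keys p.
      monom (Poly_Mapping.lookup p e * s ^ expo 1 e * t ^ expo 3 e) (expo 2 e))"

lemma poly_fibre_poly: "poly (fibre_poly s t p) y = peval p (point4 s y t 1)"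
  unfolding fibre_poly_def peval_eq_sum mono_val_point4 poly_sum poly_monom by (simp add: mult_ac)

lemma coeff_fibre_poly:
  "coeff (fibre_poly s t p) j =
    (\<Sum>e\<in>{e\<in>Poly_Mapping.keys p. expo 2 e = j}. Poly_Mapping.lookup p e * s ^ expo 1 e * t ^ expo 3 e)"
  unfolding fibre_poly_def coeff_sum coeff_monom by (simp add: sum.inter_filter)

lemma degree_fibre_poly_le:
  assumes "p \<in> S_deg r (P, int q)"
  shows "degree (fibre_poly s t p) \<le> q"
proof (rule degree_le, intro allI impI)
  fix j assume "q < j"
  then have empty: "{e\<in>Poly_Mapping.keys p. expo 2 e = j} = {}"
    using assms by (force dest: S_degD simp: mono_deg_expo)
  show "coeff (fibre_poly s t p) j = 0"
    unfolding coeff_fibre_poly empty by simp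
qed

lemma peval_fibre_infinity:
  assumes "p \<in> S_deg r (P, int q)"
  shows "peval p (point4 s 1 t 0) = coeff (fibre_poly s t p) q"
proof -
  have "peval p (point4 s 1 t 0) = (\<Sum>e\<in>Poly_Mapping.keys p.
      if expo 2 e = q then Poly_Mapping.lookup p e * s ^ expo 1 e * t ^ expo 3 e else 0)"
    unfolding peval_eq_sum mono_val_point4
  proof (rule sum.cong)
    fix e assume "e \<in> Poly_Mapping.keys p"
    then have "expo 4 e = 0 \<longleftrightarrow> expo 2 e = q"
      using assms by (auto dest!: S_degD simp: mono_deg_expo)
    then show "Poly_Mapping.lookup p e * (s ^ expo 1 e * 1 ^ expo 2 e * t ^ expo 3 e * 0 ^ expo 4 e) =
        (if expo 2 e = q then Poly_Mapping.lookup p e * s ^ expo 1 e * t ^ expo 3 e else 0)"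
      by (auto simp: power_0_left)
  qed simp
  then show ?thesis by (simp add: coeff_fibre_poly sum.inter_filter)
qed

lemma coeff_fibre_poly_scale:
  assumes p: "p \<in> S_deg r (int P, int q)" and "j \<le> q"
  shows "l ^ (r * (q - j)) * coeff (fibre_poly (l * s) (l * t) p) j = l ^ P * coeff (fibre_poly s t p) j"
  unfolding coeff_fibre_poly sum_distrib_left
proof (rule sum.cong)
  fix e assume "e \<in> {e \<in> Poly_Mapping.keys p. expo 2 e = j}"
  then have e: "e \<in> Poly_Mapping.keys p" "expo 2 e = j" by auto
  then have "expo 4 e = q - j"
    using S_deg_natD(2)[OF p e(1)] by simp
  then have "r * (q - j) + expo 1 e + expo 3 e = P"
    using S_deg_natD(1)[OF p e(1)] by simp
  then have "l ^ P = l ^ (r * (q - j)) * l ^ expo 1 e * l ^ expo 3 e"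
    by (metis power_add)
  then show "l ^ (r * (q - j)) * (Poly_Mapping.lookup p e * (l * s) ^ expo 1 e * (l * t) ^ expo 3 e) =
      l ^ P * (Poly_Mapping.lookup p e * s ^ expo 1 e * t ^ expo 3 e)"
    by (simp add: power_mult_distrib mult_ac)
qed simp

lemma is_poly_fun_coeff_fibre_poly:
  assumes "is_poly_fun S" "is_poly_fun T"
  shows "is_poly_fun (\<lambda>x. coeff (fibre_poly (S x) (T x) p) j)"
  unfolding coeff_fibre_poly
  by (intro is_poly_fun_sum is_poly_fun_mult is_poly_fun_const is_poly_fun_power assms)

definition fibre_resultant :: "nat \<Rightarrow> nat \<Rightarrow> cpoly \<Rightarrow> cpoly \<Rightarrow> complex \<Rightarrow> complex \<Rightarrow> complex" where
  "fibre_resultant m n g k s t =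
    Determinant.det (sylvester_mat_sub m n (fibre_poly s t g) (fibre_poly s t k))"

lemma fibre_resultant_0_imp_common_zero:
  assumes g: "g \<in> S_deg r (P, int m)" and k: "k \<in> S_deg r (P', int n)"
    and st: "s \<noteq> 0 \<or> t \<noteq> 0" and res: "fibre_resultant m n g k s t = 0"
  shows "\<exists>x. outside_Z x \<and> peval g x = 0 \<and> peval k x = 0"
  using sylvester_det_0_imp_common_root[OF degree_fibre_poly_le[OF g] degree_fibre_poly_le[OF k]
      res[unfolded fibre_resultant_def]]
proof
  assume "coeff (fibre_poly s t g) m = 0 \<and> coeff (fibre_poly s t k) n = 0"
  then show ?thesis
    using st peval_fibre_infinity[OF g] peval_fibre_infinity[OF k]
    by (metis outside_Z_point4 zero_neq_one)
next
  assume "\<exists>y. poly (fibre_poly s t g) y = 0 \<and> poly (fibre_poly s t k) y = 0"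
  then show ?thesis
    using st by (metis outside_Z_point4 poly_fibre_poly zero_neq_one)
qed

lemma is_poly_fun_fibre_resultant:
  assumes "is_poly_fun S" "is_poly_fun T"
  shows "is_poly_fun (\<lambda>x. fibre_resultant m n g k (S x) (T x))"
  unfolding fibre_resultant_def
proof (rule is_poly_fun_det[OF sylvester_mat_sub_carrier])
  fix i j assume "i < m + n" "j < m + n"
  then show "is_poly_fun (\<lambda>x. sylvester_mat_sub m n (fibre_poly (S x) (T x) g) (fibre_poly (S x) (T x) k) $$ (i, j))"
    unfolding sylvester_mat_sub_index[OF \<open>i < m + n\<close> \<open>j < m + n\<close>]
    by (intro is_poly_fun_if is_poly_fun_const is_poly_fun_coeff_fibre_poly assms)
qed

text \<open>The action \<open>(s, t) \<mapsto> (l s, l t)\<close> of \<open>\<complex>\<^sup>*\<close> rescales the rows and columns of the Sylvester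
  matrix of the fibre restrictions.\<close>

lemma sylvester_fibre_entry_scale:
  assumes g: "g \<in> S_deg r (int p, int m)" and k: "k \<in> S_deg r (int p', int n)"
    and ij: "i < m + n" "j < m + n"
  shows "l ^ (r * j) * sylvester_mat_sub m n (fibre_poly (l * s) (l * t) g) (fibre_poly (l * s) (l * t) k) $$ (i, j) =
    l ^ (if i < n then p + r * i else p' + r * (i - n)) *
      sylvester_mat_sub m n (fibre_poly s t g) (fibre_poly s t k) $$ (i, j)"
proof (cases "i < n")
  case True
  show ?thesis
  proof (cases "i \<le> j \<and> j - i \<le> m")
    case True
    then have le: "m + i - j \<le> m" and "m - (m + i - j) = j - i" "j = i + (j - i)" by arith+
    then have "r * j = r * i + r * (m - (m + i - j))" by (metis distrib_left)
    with True \<open>i < n\<close> ij show ?thesis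
      using coeff_fibre_poly_scale[OF g le, of l s t]
      by (simp add: sylvester_mat_sub_index power_add mult_ac)
  qed (use True ij in \<open>auto simp: sylvester_mat_sub_index\<close>)
next
  case False
  show ?thesis
  proof (cases "i - n \<le> j \<and> j \<le> i")
    case True
    then have le: "i - j \<le> n" and "n - (i - j) = j - (i - n)" "j = (i - n) + (j - (i - n))"
      using False by arith+
    then have "r * j = r * (i - n) + r * (n - (i - j))" by (metis distrib_left)
    with True \<open>\<not> i < n\<close> ij show ?thesis
      using coeff_fibre_poly_scale[OF k le, of l s t]
      by (simp add: sylvester_mat_sub_index power_add mult_ac)
  qed (use False ij in \<open>auto simp: sylvester_mat_sub_index\<close>)
qed

lemma fibre_resultant_scale:
  assumes g: "g \<in> S_deg r (int p, int m)" and k: "k \<in> S_deg r (int p', int n)" and l: "l \<noteq> 0"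
  shows "l ^ (r * m * n) * fibre_resultant m n g k (l * s) (l * t) =
    l ^ (n * p + m * p') * fibre_resultant m n g k s t"
proof -
  define w where "w i = (if i < n then p + r * i else p' + r * (i - n))" for i
  define T where "T = (\<Sum>i<n. i) + (\<Sum>i<m. i)"
  have "(\<Sum>j<m + n. j) = m * n + T"
    unfolding add.commute[of m n] sum_lessThan_add_split T_def by (simp add: sum.distrib)
  then have "(\<Sum>j<m + n. r * j) = r * (m * n) + r * T"
    by (simp flip: sum_distrib_left distrib_left)
  then have "(\<Prod>j<m + n. l ^ (r * j)) = l ^ (r * (m * n) + r * T)"
    by (simp flip: power_sum)
  moreover have "(\<Sum>i<m + n. w i) = n * p + m * p' + r * T"
    unfolding add.commute[of m n] sum_lessThan_add_split T_def w_def
    by (simp add: sum.distrib sum_distrib_left distrib_left)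
  then have "(\<Prod>i<m + n. l ^ w i) = l ^ (n * p + m * p' + r * T)"
    by (simp flip: power_sum)
  moreover have "(\<Prod>j<m + n. l ^ (r * j)) * fibre_resultant m n g k (l * s) (l * t) =
      (\<Prod>i<m + n. l ^ w i) * fibre_resultant m n g k s t"
    unfolding fibre_resultant_def w_def
    by (rule det_scale_rows_cols[OF sylvester_mat_sub_carrier sylvester_mat_sub_carrier
          sylvester_fibre_entry_scale[OF g k]])
  ultimately show ?thesis
    using l by (simp add: power_add mult_ac)
qed

text \<open>The fibre resultant \<open>\<Phi>(s, t)\<close> is a polynomial in each variable and homogeneous of
  weight \<open>N\<close>, the intersection number. If \<open>\<Phi>(-, 1)\<close> has no root it is a constant \<open>c\<close>, and
  then \<open>\<Phi>(1, t) = c t\<^sup>N\<close> vanishes at \<open>t = 0\<close>.\<close>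

lemma common_zero_if_inter_pos:
  assumes g: "g \<in> S_deg r (int p, int m)" and k: "k \<in> S_deg r (int p', int n)"
    and pos: "0 < inter r (int p, int m) (int p', int n)"
  shows "\<exists>x. outside_Z x \<and> peval g x = 0 \<and> peval k x = 0"
proof (cases "\<exists>u. fibre_resultant m n g k u 1 = 0")
  case True
  then show ?thesis
    using fibre_resultant_0_imp_common_zero[OF g k] by (meson one_neq_zero)
next
  case False
  let ?\<Phi> = "fibre_resultant m n g k"
  obtain R where R: "\<And>s. ?\<Phi> s 1 = poly R s"
    using is_poly_fun_fibre_resultant[OF is_poly_fun_id is_poly_fun_const]
    unfolding is_poly_fun_def by blast
  have "degree R = 0"
    using False R fundamental_theorem_of_algebra constant_degree by metis
  then have const: "?\<Phi> s 1 = ?\<Phi> 0 1" for s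
    using R by (metis degree_0_id poly_const_conv)
  define N where "N = n * p + m * p' - r * m * n"
  have "r * m * n < n * p + m * p'"
    using pos unfolding inter_def by (simp add: algebra_simps flip: of_nat_mult of_nat_add)
  then have N: "n * p + m * p' = r * m * n + N" "0 < N"
    by (simp_all add: N_def)
  obtain R2 where R2: "\<And>t. ?\<Phi> 1 t = poly R2 t"
    using is_poly_fun_fibre_resultant[OF is_poly_fun_const is_poly_fun_id]
    unfolding is_poly_fun_def by blast
  have "poly R2 t = poly (monom (?\<Phi> 0 1) N) t" if "t \<noteq> 0" for t
  proof -
    have "t ^ (r * m * n) * ?\<Phi> (t * (1 / t)) (t * 1) = t ^ (n * p + m * p') * ?\<Phi> (1 / t) 1"
      by (rule fibre_resultant_scale[OF g k that])
    then have "t ^ (r * m * n) * ?\<Phi> 1 t = t ^ (r * m * n) * (t ^ N * ?\<Phi> 0 1)"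
      using that by (simp add: N(1) const[of "1 / t"] power_add mult.assoc)
    then show ?thesis
      using that by (simp add: R2 poly_monom mult.commute)
  qed
  then have "R2 = monom (?\<Phi> 0 1) N"
    by (rule poly_eq_if_eq_off_point)
  then have "?\<Phi> 1 0 = 0"
    using R2[of 0] N(2) by (simp add: poly_monom)
  then show ?thesis
    using fibre_resultant_0_imp_common_zero[OF g k] by (meson one_neq_zero)
qed

section \<open>Nondegenerate forms of ample class\<close>

lemma peval_corner:
  assumes p: "p \<in> S_deg r (int a, int b)"
  shows "peval p (point4 1 1 0 0) = Poly_Mapping.lookup p (a, b, 0, 0)"
proof -
  have "peval p (point4 1 1 0 0) =
      (\<Sum>e\<in>Poly_Mapping.keys p. if e = (a, b, 0, 0) then Poly_Mapping.lookup p e else 0)"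
    unfolding peval_eq_sum mono_val_point4
  proof (rule sum.cong[OF refl])
    fix e assume e: "e \<in> Poly_Mapping.keys p"
    show "Poly_Mapping.lookup p e * (1 ^ expo 1 e * 1 ^ expo 2 e * 0 ^ expo 3 e * 0 ^ expo 4 e) =
        (if e = (a, b, 0, 0) then Poly_Mapping.lookup p e else 0)"
    proof (cases "expo 3 e = 0 \<and> expo 4 e = 0")
      case True
      with S_deg_natD[OF p e] have "e = (a, b, 0, 0)" by (intro mono_eqI) auto
      then show ?thesis by simp
    next
      case False
      then show ?thesis by (auto simp: power_0_left)
    qed
  qed
  then show ?thesis by (simp add: sum.delta' in_keys_iff)
qed

text \<open>Otherwise every \<open>x\<^sub>i \<partial>f/\<partial>x\<^sub>i\<close> vanishes at the torus-fixed point \<open>(1 : 1 : 0 : 0)\<close>.\<close>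

lemma corner_coeff_nonzero_if_nondegenerate:
  assumes f: "f \<in> S_deg r (int a, int b)" and nd: "nondegenerate f"
  shows "Poly_Mapping.lookup f (a, b, 0, 0) \<noteq> 0"
proof
  assume "Poly_Mapping.lookup f (a, b, 0, 0) = 0"
  then have "\<forall>i\<in>{1..4::nat}. peval (xdiff i f) (point4 1 1 0 0) = 0"
    using peval_corner[OF xdiff_in_S_deg[OF f]] by (simp add: lookup_xdiff)
  then show False
    using nd unfolding nondegenerate_def by (metis outside_Z_point4 one_neq_zero)
qed

lemma inter_pos_if_split:
  assumes split: "r * (m + m') < p + p'" and m: "1 \<le> m + m'"
    and nonzero: "(p, m) \<noteq> (0, 0)" "(p', m') \<noteq> (0, 0)"
  shows "0 < inter r (int p, int m) (int p', int m')"
proof -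
  have "r * m * m' < p * m' + m * p'"
  proof (cases "m = 0 \<or> m' = 0")
    case True
    then show ?thesis using m nonzero by auto
  next
    case False
    from split have "r * m < p \<or> r * m' < p'"
      by (simp add: distrib_left) linarith
    then show ?thesis
    proof
      assume "r * m < p"
      then have "r * m * m' < p * m'" using False by simp
      then show ?thesis by linarith
    next
      assume "r * m' < p'"
      then have "m * (r * m') < m * p'" using False by simp
      moreover have "r * m * m' = m * (r * m')" by (simp add: mult_ac)
      ultimately show ?thesis by linarith
    qed
  qed
  then show ?thesis
    unfolding inter_def by (simp add: algebra_simps flip: of_nat_mult of_nat_add)
qed

text \<open>A factorization would give two curves of positive intersection number, and \<open>f\<close> is
  singular where they meet.\<close>

lemma irreducible_dehom_if_nondegenerate:
  assumes amp: "ample r \<beta>" and f: "f \<in> S_deg r \<beta>" and nd: "nondegenerate f"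
  shows "irreducible (dehom 1 f)"
proof -
  obtain a b where \<beta>: "\<beta> = (int a, int b)" and b: "1 \<le> b" and ab: "r * b < a"
    using ample_classE[OF amp] .
  have f': "f \<in> S_deg r (int a, int b)" using f \<beta> by simp
  have corner: "Poly_Mapping.lookup f (a, b, 0, 0) \<noteq> 0"
    by (rule corner_coeff_nonzero_if_nondegenerate[OF f' nd])
  have degF: "degree (dehom 1 f) = b"
    using degree_dehom_corner[OF f' corner] by simp
  show ?thesis
  proof (rule irreducibleI)
    show "dehom 1 f \<noteq> 0" using degF b by auto
    show "\<not> is_unit (dehom 1 f)"
      using degF b by (metis is_unit_polyE degree_pCons_0 not_one_le_zero)
  next
    fix G K assume GK: "dehom 1 f = G * K"
    show "is_unit G \<or> is_unit K"
    proof (rule ccontr)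
      assume units: "\<not> (is_unit G \<or> is_unit K)"
      have "G \<noteq> 0" "K \<noteq> 0" using GK degF b by auto
      with units have "(homog_D1_deg r G, degree G) \<noteq> (0, 0)" "(homog_D1_deg r K, degree K) \<noteq> (0, 0)"
        using homog_class_nonzero by auto
      with factorization_lift[OF f' corner GK] b ab
      have "0 < inter r (int (homog_D1_deg r G), int (degree G)) (int (homog_D1_deg r K), int (degree K))"
        by (intro inter_pos_if_split) auto
      then obtain x where "outside_Z x" "peval (homog r G) x = 0" "peval (homog r K) x = 0"
        using common_zero_if_inter_pos[OF homog_in_S_deg homog_in_S_deg] by blast
      with factorization_lift(1)[OF f' corner GK] nd show False
        using degenerate_if_factors_meet by blast
    qed
  qed
qed

lemma scalar_multiple_if_dehom_dvd:
  assumes f: "f \<in> S_deg r (int a, int b)" and h: "h \<in> S_deg r (int a, int b)"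
    and corner: "Poly_Mapping.lookup f (a, b, 0, 0) \<noteq> 0" and dvd: "dehom 1 f dvd dehom 1 h"
  shows "\<exists>c. h = pscale c f"
proof -
  let ?F = "dehom 1 f" and ?H = "dehom 1 h"
  have degF: "degree ?F = b" and degLF: "degree (lead_coeff ?F) = a"
    using degree_dehom_corner[OF f corner] by simp_all
  then have F0: "?F \<noteq> 0" and LF0: "lead_coeff ?F \<noteq> 0"
    using corner dehom_eq_0_iff_S_deg[OF f] by auto
  obtain Q where Q: "?H = ?F * Q" using dvd by (elim dvdE)
  have "degree Q = 0"
  proof (cases "Q = 0")
    case False
    then show ?thesis
      using Q degree_mult_eq[OF F0 False] degF degree_dehom_S_deg_le[OF h, of 1] by simp
  qed simp
  then obtain q where q: "Q = [:q:]" by (elim degree_eq_zeroE)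
  have "degree q = 0"
  proof (cases "q = 0")
    case False
    have "coeff ?H b = q * lead_coeff ?F" using Q q degF by simp
    then show ?thesis
      using degree_mult_eq[OF False LF0] degLF degree_coeff_dehom_S_deg_le[OF h, of 1 b] by simp
  qed simp
  then obtain c where "q = [:c:]" by (elim degree_eq_zeroE)
  with Q q have "?H = dehom 1 (pscale c f)"
    by (simp add: dehom_pscale mult.commute)
  then show ?thesis
    using dehom_inj_on_S_deg[OF h pscale_in_S_deg[OF f]] by blast
qed

lemma degree_dehom_S_deg_2K_less:
  assumes b: "b \<in> S_deg r ((P, int q) + K_cls r + K_cls r)" and q: "1 \<le> q"
  shows "degree (dehom c b) < q"
proof -
  have "degree (dehom c b) \<le> q - 1"
  proof (rule degree_dehom_le)
    fix e assume "e \<in> Poly_Mapping.keys b"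
    from S_degD[OF b this] have "int (expo 2 e) + int (expo 4 e) = int q - 4"
      by (simp add: K_cls_def mono_deg_expo)
    then show "expo 2 e \<le> q - 1" by linarith
  qed
  with q show ?thesis by linarith
qed

lemma syzygy_trivial_if_nondegenerate:
  assumes amp: "ample r \<beta>" and f: "f \<in> S_deg r \<beta>" and nd: "nondegenerate f"
    and h: "h \<in> S_deg r \<beta>" and h_indep: "h \<notin> {pscale c f | c. True}"
    and a: "a \<in> S_deg r (\<beta> + K_cls r + K_cls r)" and b: "b \<in> S_deg r (\<beta> + K_cls r + K_cls r)"
    and eq: "a * f + b * h = 0"
  shows "a = 0 \<and> b = 0"
proof -
  obtain p q where \<beta>: "\<beta> = (int p, int q)" and q: "1 \<le> q"
    using ample_classE[OF amp] by blast
  have f': "f \<in> S_deg r (int p, int q)" and h': "h \<in> S_deg r (int p, int q)"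
    using f h \<beta> by simp_all
  have corner: "Poly_Mapping.lookup f (p, q, 0, 0) \<noteq> 0"
    by (rule corner_coeff_nonzero_if_nondegenerate[OF f' nd])
  let ?F = "dehom 1 f" and ?A = "dehom 1 a" and ?B = "dehom 1 b" and ?H = "dehom 1 h"
  have degF: "degree ?F = q"
    using degree_dehom_corner[OF f' corner] by simp
  have F0: "?F \<noteq> 0"
    using corner dehom_eq_0_iff_S_deg[OF f'] by auto
  have prime: "prime_elem ?F"
    using irreducible_dehom_if_nondegenerate[OF amp f nd] by (rule irreducible_imp_prime_elem)
  have AB: "?A * ?F + ?B * ?H = 0"
    using eq by (metis dehom_add dehom_mult dehom_0)
  have "b = 0"
  proof (rule ccontr)
    assume "b \<noteq> 0"
    then have "?B \<noteq> 0" using dehom_eq_0_iff_S_deg[OF b] by simp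
    moreover have "degree ?B < degree ?F"
      using degree_dehom_S_deg_2K_less[OF b[unfolded \<beta>] q] degF by simp
    moreover have "?F dvd ?B * ?H"
      using AB by (metis add_eq_0_iff dvd_minus_iff dvd_triv_right)
    ultimately have "?F dvd ?H"
      using prime by (metis dvd_imp_degree_le not_le prime_elem_dvd_multD)
    then show False
      using scalar_multiple_if_dehom_dvd[OF f' h' corner] h_indep by blast
  qed
  with AB F0 have "?A = 0" by simp
  with \<open>b = 0\<close> show ?thesis
    using dehom_eq_0_iff_S_deg[OF a] by simp
qed

text \<open>If \<open>(a, b) \<mapsto> a f + b h\<close> is injective on \<open>S \<times> S\<close>, a basis \<open>B\<close> of \<open>S\<close> yields the basis
  \<open>B f \<union> B h\<close> of the image, indexed here by the disjoint sum \<open>B <+> B\<close>.\<close>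

definition mult_pair :: "cpoly \<Rightarrow> cpoly \<Rightarrow> cpoly + cpoly \<Rightarrow> cpoly" where
  "mult_pair f h = case_sum (\<lambda>m. m * f) (\<lambda>m. m * h)"

lemma inj_on_mult_pair:
  assumes sub: "module.subspace pscale S" and B: "B \<subseteq> S" "0 \<notin> B"
    and inj: "\<And>a b. a \<in> S \<Longrightarrow> b \<in> S \<Longrightarrow> a * f + b * h = 0 \<Longrightarrow> a = 0 \<and> b = 0"
  shows "inj_on (mult_pair f h) (B <+> B)"
proof -
  interpret V: vector_space pscale by (rule vector_space_pscale)
  have diff: "m - m' \<in> S" and neg: "- m' \<in> S" if "m \<in> B" "m' \<in> B" for m m'
    using that B(1) sub by (auto intro: V.subspace_diff V.subspace_neg)
  have zero: "0 \<in> S"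
    using sub by (rule V.subspace_0)
  have cancel_f: "m = m'" if "m \<in> B" "m' \<in> B" "m * f = m' * f" for m m'
    using inj[OF diff[OF that(1,2)] zero] that(3) by (simp add: algebra_simps)
  have cancel_h: "m = m'" if "m \<in> B" "m' \<in> B" "m * h = m' * h" for m m'
    using inj[OF zero diff[OF that(1,2)]] that(3) by (simp add: algebra_simps)
  have no_mix: "m * f \<noteq> m' * h" if "m \<in> B" "m' \<in> B" for m m'
    using inj[OF _ neg[OF that]] B that by auto
  show ?thesis
    by (rule inj_onI) (auto simp: mult_pair_def dest: cancel_f cancel_h no_mix)
qed

lemma independent_mult_pair_image:
  assumes sub: "module.subspace pscale S"
    and B: "finite B" "B \<subseteq> S" "\<not> module.dependent pscale B"
    and inj: "\<And>a b. a \<in> S \<Longrightarrow> b \<in> S \<Longrightarrow> a * f + b * h = 0 \<Longrightarrow> a = 0 \<and> b = 0"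
  shows "\<not> module.dependent pscale (mult_pair f h ` (B <+> B))"
proof -
  interpret V: vector_space pscale by (rule vector_space_pscale)
  define C where "C = mult_pair f h ` (B <+> B)"
  have "0 \<notin> B"
    using B(3) V.dependent_zero by blast
  then have inj_\<mu>: "inj_on (mult_pair f h) (B <+> B)"
    by (rule inj_on_mult_pair[OF sub B(2) _ inj])
  have in_S: "(\<Sum>m\<in>B. pscale (u m) m) \<in> S" for u
    using B(2) sub by (intro V.subspace_sum) (auto simp: V.subspace_def)
  have indepB: "\<forall>m\<in>B. w m = 0" if "(\<Sum>m\<in>B. pscale (w m) m) = 0" for w
    using B(3) V.dependent_finite[OF B(1)] that by blast
  have "\<not> V.dependent C"
  proof
    assume "V.dependent C"
    then obtain u where u: "\<exists>v\<in>C. u v \<noteq> 0" "(\<Sum>v\<in>C. pscale (u v) v) = 0"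
      using V.dependent_finite[of C] B(1) by (auto simp: C_def)
    have "(\<Sum>v\<in>C. pscale (u v) v) = (\<Sum>x\<in>B <+> B. pscale (u (mult_pair f h x)) (mult_pair f h x))"
      unfolding C_def by (rule sum.reindex[OF inj_\<mu>, unfolded comp_def])
    also have "\<dots> = (\<Sum>m\<in>B. pscale (u (m * f)) m) * f + (\<Sum>m\<in>B. pscale (u (m * h)) m) * h"
      by (simp add: sum.Plus B(1) mult_pair_def pscale_mult_left sum_distrib_right)
    finally have "(\<Sum>m\<in>B. pscale (u (m * f)) m) * f + (\<Sum>m\<in>B. pscale (u (m * h)) m) * h = 0"
      using u(2) by simp
    then have "(\<Sum>m\<in>B. pscale (u (m * f)) m) = 0" "(\<Sum>m\<in>B. pscale (u (m * h)) m) = 0"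
      using inj[OF in_S[of "\<lambda>m. u (m * f)"] in_S[of "\<lambda>m. u (m * h)"]] by simp_all
    from indepB[OF this(1)] indepB[OF this(2)] u(1) show False
      by (auto simp: C_def mult_pair_def)
  qed
  then show ?thesis by (simp add: C_def)
qed

lemma span_mult_pair_image:
  assumes B: "finite B" "B \<subseteq> S" "S \<subseteq> module.span pscale B" and zero: "0 \<in> S"
  shows "module.span pscale (mult_pair f h ` (B <+> B)) =
    module.span pscale {a * f + b * h | a b. a \<in> S \<and> b \<in> S}"
proof -
  interpret V: vector_space pscale by (rule vector_space_pscale)
  let ?C = "mult_pair f h ` (B <+> B)" and ?E = "{a * f + b * h | a b. a \<in> S \<and> b \<in> S}"
  have "?C \<subseteq> ?E"
  proof
    fix v assume "v \<in> ?C"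
    then obtain m where "m \<in> B" "v = m * f + 0 * h \<or> v = 0 * f + m * h"
      by (auto simp: mult_pair_def)
    then show "v \<in> ?E" using B(2) zero by blast
  qed
  have "a * g \<in> V.span ?C" if "a \<in> S" "g \<in> {f, h}" for a g
  proof -
    obtain u where "a = (\<Sum>m\<in>B. pscale (u m) m)"
      using \<open>a \<in> S\<close> B(3) V.span_finite[OF B(1)] by blast
    then have "a * g = (\<Sum>m\<in>B. pscale (u m) (m * g))"
      by (simp add: pscale_mult_left sum_distrib_right)
    moreover have "m * g \<in> ?C" if "m \<in> B" for m
      using that \<open>g \<in> {f, h}\<close> by (force simp: mult_pair_def)
    ultimately show ?thesis
      by (simp add: V.span_sum V.span_scale V.span_base)
  qed
  then have "?E \<subseteq> V.span ?C"
    by (blast intro: V.span_add)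
  moreover have "?C \<subseteq> V.span ?E"
    using \<open>?C \<subseteq> ?E\<close> V.span_superset by (rule subset_trans)
  ultimately show ?thesis
    by (simp add: V.span_eq)
qed

lemma cdim_pair_multiples:
  fixes S G :: "cpoly set"
  assumes sub: "module.subspace pscale S" and G: "finite G" "S \<subseteq> module.span pscale G"
    and inj: "\<And>a b. a \<in> S \<Longrightarrow> b \<in> S \<Longrightarrow> a * f + b * h = 0 \<Longrightarrow> a = 0 \<and> b = 0"
  shows "cdim {a * f + b * h | a b. a \<in> S \<and> b \<in> S} = 2 * cdim S"
proof -
  interpret V: vector_space pscale by (rule vector_space_pscale)
  obtain B where B: "B \<subseteq> S" "V.independent B" "S \<subseteq> V.span B" "card B = V.dim S"
    using V.basis_exists by blast
  have finB: "finite B"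
    using V.independent_span_bound[OF G(1) B(2)] B(1) G(2) by blast
  have "0 \<notin> B"
    using B(2) V.dependent_zero by blast
  then have "inj_on (mult_pair f h) (B <+> B)"
    by (rule inj_on_mult_pair[OF sub B(1) _ inj])
  then have "card (mult_pair f h ` (B <+> B)) = 2 * card B"
    using finB by (simp add: card_image card_Plus)
  moreover have "V.dim {a * f + b * h | a b. a \<in> S \<and> b \<in> S} = card (mult_pair f h ` (B <+> B))"
    using independent_mult_pair_image[OF sub finB B(1,2) inj]
      span_mult_pair_image[OF finB B(1,3) V.subspace_0[OF sub]]
    by (intro V.dim_eq_card) simp_all
  ultimately show ?thesis
    unfolding cdim_def using B(4) by simp
qed

theorem mainTheorem7:
  fixes r :: nat and \<beta> :: cls and f :: cpoly
  assumes "ample r \<beta>"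
    and "f \<in> S_deg r \<beta>"
    and "nondegenerate f"
    and "J1_deg r f (\<beta> + \<beta> + K_cls r + K_cls r) \<noteq> {0}"
  shows "(\<forall>h \<in> J1_deg r f \<beta> - {pscale c f | c. True}.
            \<forall>a \<in> S_deg r (\<beta> + K_cls r + K_cls r). \<forall>b \<in> S_deg r (\<beta> + K_cls r + K_cls r).
              (a \<noteq> 0 \<or> b \<noteq> 0) \<longrightarrow> a * f + b * h \<noteq> 0)
       \<and> (\<forall>h \<in> J1_deg r f \<beta> - {pscale c f | c. True}.
            cdim {a * f + b * h | a b.
                a \<in> S_deg r (\<beta> + K_cls r + K_cls r) \<and> b \<in> S_deg r (\<beta> + K_cls r + K_cls r)}
            = 2 * cdim (S_deg r (\<beta> + K_cls r + K_cls r)))"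
proof -
  let ?S = "S_deg r (\<beta> + K_cls r + K_cls r)"
  have syzygy: "a = 0 \<and> b = 0"
    if "h \<in> J1_deg r f \<beta> - {pscale c f | c. True}" "a \<in> ?S" "b \<in> ?S" "a * f + b * h = 0" for h a b
    using syzygy_trivial_if_nondegenerate[OF assms(1-3)] that by (auto simp: J1_deg_def)
  show ?thesis
  proof (intro conjI ballI)
    fix h assume "h \<in> J1_deg r f \<beta> - {pscale c f | c. True}"
    with syzygy show "cdim {a * f + b * h | a b. a \<in> ?S \<and> b \<in> ?S} = 2 * cdim ?S"
      by (intro cdim_pair_multiples[OF S_deg_subspace finite_imageI[OF finite_mono_deg_class]
            S_deg_subset_span_monomials])
  qed (use syzygy in blast)
qed

end
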